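(* Let $N,d\in\mathbb{N}^*$, $\alpha>0$, $A\in\mathbb{R}_+^{N\times N}$, and let $\psi:\mathbb{R}_+\to\mathbb{R}_+$ satisfy $(r_1-r_2)(\psi(r_1)-\psi(r_2))\le0$ for all $r_1,r_2\ge0$ and $0<\psi(r)\le\psi(0)\le1$. Assume that for all $i\ne j$, $A_{ij}>0$ or $A_{ji}>0$ or there exists $k$ with $A_{ik}>0$ and $A_{jk}>0$ (scrambling). Consider solutions on $\mathbb{R}_+$ of $$\frac{dx_i}{dt}=v_i,\qquad\frac{dv_i}{dt}=\alpha\sum_{j\ne i}Q_t(i,j)(v_j-v_i)$$ with either (CS) $Q_t(i,j)=A_{ij}\psi(\|x_j(t)-x_i(t)\|_2)$, or (MT) $Q_t(i,j)=\dfrac{A_{ij}\psi(\|x_i(t)-x_j(t)\|_2)}{a_i+\sum_{k\ne i}A_{ik}\psi(\|x_i(t)-x_k(t)\|_2)}$, where $a\in\mathbb{R}_+^N$ satisfies $a_i>0$ whenever $A_{ij}=0$ for all $j\ne i$. Then the solution flocks provided $$V(0)<\alpha\chi(A)\int_{X(0)}^{+\infty}\psi(r)\,dr\quad\text{for (CS)},\qquad V(0)<\alpha\chi(B)\int_{X(0)}^{+\infty}\psi(r)\,dr\quad\text{for (MT)},$$ where $\chi(M)=\min_{i\ne j}\big(M_{ij}+M_{ji}+\sum_{k\ne i,j}M_{ik}\wedge M_{jk}\big)$ and $B_{ij}=\dfrac{A_{ij}}{a_i+\sum_{k\ne i}A_{ik}}$.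
   Context: $X(t)=\sup_{i,j}\|x_i(t)-x_j(t)\|_2$, $V(t)=\sup_{i,j}\|v_i(t)-v_j(t)\|_2$. Flocking means $\sup_{t\ge0}X(t)<+\infty$ and $V(t)\to0$ as $t\to+\infty$. $a\wedge b=\min(a,b)$. *)

theory Defs
  imports "HOL-Analysis.Analysis"
begin

(* Agents are indexed by 0..N-1; positions/velocities live in a Euclidean space 'a
   (dimension d = DIM('a) >= 1), norm = Euclidean 2-norm. *)

definition diamX :: "nat \<Rightarrow> (nat \<Rightarrow> real \<Rightarrow> 'a::euclidean_space) \<Rightarrow> real \<Rightarrow> real" where
  "diamX N x t = (SUP p\<in>{..<N}\<times>{..<N}. norm (x (fst p) t - x (snd p) t))"

definition chi :: "nat \<Rightarrow> (nat \<Rightarrow> nat \<Rightarrow> real) \<Rightarrow> real" where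
  "chi N M = Min {M i j + M j i + (\<Sum>k\<in>{..<N} - {i, j}. min (M i k) (M j k)) | i j. i < N \<and> j < N \<and> i \<noteq> j}"

definition B_mat :: "nat \<Rightarrow> (nat \<Rightarrow> nat \<Rightarrow> real) \<Rightarrow> (nat \<Rightarrow> real) \<Rightarrow> nat \<Rightarrow> nat \<Rightarrow> real" where
  "B_mat N A a i j = A i j / (a i + (\<Sum>k\<in>{..<N} - {i}. A i k))"

definition Q_CS :: "(nat \<Rightarrow> nat \<Rightarrow> real) \<Rightarrow> (real \<Rightarrow> real) \<Rightarrow> (nat \<Rightarrow> real \<Rightarrow> 'a::euclidean_space)
   \<Rightarrow> real \<Rightarrow> nat \<Rightarrow> nat \<Rightarrow> real" where
  "Q_CS A \<psi> x t i j = A i j * \<psi> (norm (x j t - x i t))"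

definition Q_MT :: "nat \<Rightarrow> (nat \<Rightarrow> nat \<Rightarrow> real) \<Rightarrow> (nat \<Rightarrow> real) \<Rightarrow> (real \<Rightarrow> real)
   \<Rightarrow> (nat \<Rightarrow> real \<Rightarrow> 'a::euclidean_space) \<Rightarrow> real \<Rightarrow> nat \<Rightarrow> nat \<Rightarrow> real" where
  "Q_MT N A a \<psi> x t i j = A i j * \<psi> (norm (x i t - x j t)) /
      (a i + (\<Sum>k\<in>{..<N} - {i}. A i k * \<psi> (norm (x i t - x k t))))"

definition is_solution :: "nat \<Rightarrow> real \<Rightarrow> (real \<Rightarrow> nat \<Rightarrow> nat \<Rightarrow> real)
   \<Rightarrow> (nat \<Rightarrow> real \<Rightarrow> 'a::euclidean_space) \<Rightarrow> (nat \<Rightarrow> real \<Rightarrow> 'a) \<Rightarrow> bool" where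
  "is_solution N \<alpha> Q x v \<longleftrightarrow>
     (\<forall>i<N. \<forall>t\<ge>0.
        (x i has_vector_derivative v i t) (at t within {0..}) \<and>
        (v i has_vector_derivative
           (\<alpha> *\<^sub>R (\<Sum>j\<in>{..<N} - {i}. Q t i j *\<^sub>R (v j t - v i t)))) (at t within {0..}))"

definition flocks :: "nat \<Rightarrow> (nat \<Rightarrow> real \<Rightarrow> 'a::euclidean_space) \<Rightarrow> (nat \<Rightarrow> real \<Rightarrow> 'a) \<Rightarrow> bool" where
  "flocks N x v \<longleftrightarrow> bdd_above (diamX N x ` {0..}) \<and> ((\<lambda>t. diamX N v t) \<longlongrightarrow> 0) at_top"

end

theory Submission
  imports Defs
begin

text \<open>Write \<open>X\<close> and \<open>V\<close> for the diameters of positions and velocities. Along a solution their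
upper right Dini derivatives satisfy \<open>D\<^sup>+X \<le> V\<close> and \<open>D\<^sup>+V \<le> -\<alpha> \<chi> \<psi>(X) V\<close>: projected onto
the difference of an extremal pair of velocities, every velocity lies between the two, so each
common neighbour \<open>k\<close> pulls the pair together at least at the rate \<open>min (Q i k) (Q j k)\<close>.
Hence \<open>V + \<alpha> \<chi> \<Psi>(X)\<close>, with \<open>\<Psi>\<close> a primitive of \<open>\<psi>\<close>, is nonincreasing, so
\<open>\<alpha> \<chi> \<integral>\<^bsub>X(0)\<^esub>\<^bsup>X(t)\<^esup> \<psi> \<le> V(0)\<close> and the smallness condition keeps \<open>X\<close> below some \<open>R\<close>.
Then \<open>D\<^sup>+V \<le> -\<alpha> \<chi> \<psi>(R) V\<close>, which forces \<open>V \<longrightarrow> 0\<close>.\<close>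

section \<open>Upper right Dini derivatives\<close>

definition dini_le :: "(real \<Rightarrow> real) \<Rightarrow> real \<Rightarrow> real \<Rightarrow> bool" where
  "dini_le f t D \<longleftrightarrow> (\<forall>e>0. \<forall>\<^sub>F h in at_right 0. f (t + h) \<le> f t + (D + e) * h)"

lemma dini_leI:
  assumes "\<And>e. e > 0 \<Longrightarrow> \<forall>\<^sub>F h in at_right 0. f (t + h) \<le> f t + (D + e) * h"
  shows "dini_le f t D"
  using assms unfolding dini_le_def by blast

lemma dini_leD:
  assumes "dini_le f t D" "e > 0"
  shows "\<forall>\<^sub>F h in at_right 0. f (t + h) \<le> f t + (D + e) * h"
  using assms unfolding dini_le_def by blast

lemma dini_le_mono:
  assumes "dini_le f t D" "D \<le> D'"
  shows "dini_le f t D'"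
proof (rule dini_leI)
  fix e :: real assume "e > 0"
  from dini_leD[OF assms(1) this] eventually_at_right_less[of 0]
  show "\<forall>\<^sub>F h in at_right 0. f (t + h) \<le> f t + (D' + e) * h"
  proof eventually_elim
    case (elim h)
    have "(D + e) * h \<le> (D' + e) * h"
      using elim assms(2) by (intro mult_right_mono) auto
    with elim show ?case by linarith
  qed
qed

lemma dini_le_add:
  assumes "dini_le f t D" "dini_le g t E"
  shows "dini_le (\<lambda>s. f s + g s) t (D + E)"
proof (rule dini_leI)
  fix e :: real assume "e > 0"
  then have "e / 2 > 0" by simp
  from dini_leD[OF assms(1) this] dini_leD[OF assms(2) this]
  show "\<forall>\<^sub>F h in at_right 0. f (t + h) + g (t + h) \<le> f t + g t + (D + E + e) * h"
    by eventually_elim (simp add: algebra_simps)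
qed

lemma dini_le_cmult:
  assumes "dini_le f t D" "c \<ge> 0"
  shows "dini_le (\<lambda>s. c * f s) t (c * D)"
proof (rule dini_leI)
  fix e :: real assume e: "e > 0"
  define e' where "e' = e / (c + 1)"
  have e': "e' > 0" "c * e' \<le> e"
    using e assms(2) by (auto simp: e'_def field_simps)
  from dini_leD[OF assms(1) e'(1)] eventually_at_right_less[of 0]
  show "\<forall>\<^sub>F h in at_right 0. c * f (t + h) \<le> c * f t + (c * D + e) * h"
  proof eventually_elim
    case (elim h)
    have "c * f (t + h) \<le> c * (f t + (D + e') * h)"
      using elim assms(2) by (intro mult_left_mono)
    also have "\<dots> \<le> c * f t + (c * D + e) * h"
      using e'(2) elim mult_right_mono[of "c * e'" e h] by (simp add: algebra_simps)
    finally show ?case .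
  qed
qed

lemma dini_le_linear: "dini_le (\<lambda>s. c * s) t c"
  by (rule dini_leI, use eventually_at_right_less[of 0] in eventually_elim) (simp add: algebra_simps)

lemma decreasing_if_dini_le_0:
  fixes f :: "real \<Rightarrow> real"
  assumes cont: "continuous_on {0..} f" and dini: "\<And>t. t \<ge> 0 \<Longrightarrow> dini_le f t 0"
    and "0 \<le> a" "a \<le> b"
  shows "f b \<le> f a"
proof -
  have slope: "f b \<le> f a + e * (b - a)" if e: "e > 0" for e
  proof -
    define S where "S = {s \<in> {a..b}. f s - e * (s - a) \<le> f a}"
    have "continuous_on {a..b} (\<lambda>s. f s - e * (s - a))"
      by (intro continuous_intros continuous_on_subset[OF cont]) (use \<open>0 \<le> a\<close> in auto)
    then have "closed S"
      unfolding S_def by (rule continuous_on_closed_Collect_le) (auto intro: continuous_intros)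
    moreover have "a \<in> S" "bdd_above S"
      using \<open>a \<le> b\<close> by (auto simp: S_def bdd_above_def)
    ultimately have sup: "Sup S \<in> S"
      using closed_contains_Sup by blast
    have "Sup S = b"
    proof (rule ccontr)
      assume "Sup S \<noteq> b"
      with sup have s: "a \<le> Sup S" "Sup S < b" "f (Sup S) - e * (Sup S - a) \<le> f a"
        by (auto simp: S_def)
      from dini_leD[OF dini e] s(1) \<open>0 \<le> a\<close>
      have "\<forall>\<^sub>F h in at_right 0. f (Sup S + h) \<le> f (Sup S) + e * h" by simp
      moreover have "\<forall>\<^sub>F h in at_right 0. 0 < h \<and> h < b - Sup S"
        using s(2) unfolding eventually_at_right_field by (auto intro!: exI[of _ "b - Sup S"])
      ultimately have "\<forall>\<^sub>F h in at_right 0. f (Sup S + h) \<le> f (Sup S) + e * h \<and> 0 < h \<and> h < b - Sup S"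
        by eventually_elim blast
      then obtain h where "f (Sup S + h) \<le> f (Sup S) + e * h" "0 < h" "h < b - Sup S"
        using eventually_happens'[OF trivial_limit_at_right_real] by blast
      with s have "Sup S + h \<in> S"
        by (auto simp: S_def algebra_simps)
      with \<open>bdd_above S\<close> \<open>0 < h\<close> show False
        using cSup_upper by fastforce
    qed
    with sup show ?thesis
      by (simp add: S_def)
  qed
  show ?thesis
  proof (rule field_le_epsilon)
    fix e :: real assume "e > 0"
    with \<open>a \<le> b\<close> have "e / (b - a + 1) * (b - a) \<le> e"
      by (simp add: field_simps)
    with slope[of "e / (b - a + 1)"] \<open>e > 0\<close> \<open>a \<le> b\<close> show "f b \<le> f a + e"
      by simp
  qed
qed

lemma has_vector_derivative_right_remainder:
  fixes w :: "real \<Rightarrow> 'a::real_normed_vector"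
  assumes "(w has_vector_derivative w') (at t within {0..})" "t \<ge> 0" "e > 0"
  shows "\<forall>\<^sub>F h in at_right 0. norm (w (t + h) - w t - h *\<^sub>R w') \<le> e * h"
proof -
  from assms(1,3) obtain d where "d > 0" and d: "\<And>y. y \<in> {0..} \<Longrightarrow> norm (y - t) < d \<Longrightarrow>
      norm (w y - w t - (y - t) *\<^sub>R w') \<le> e * norm (y - t)"
    unfolding has_vector_derivative_def has_derivative_within_alt by blast
  show ?thesis
    unfolding eventually_at_right_field
  proof (intro exI[of _ d] conjI allI impI)
    fix h :: real assume "0 < h" "h < d"
    with d[of "t + h"] \<open>t \<ge> 0\<close> show "norm (w (t + h) - w t - h *\<^sub>R w') \<le> e * h"
      by auto
  qed fact
qed

lemma has_real_derivative_imp_dini_le: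
  assumes "(f has_real_derivative D) (at t within {0..})" "t \<ge> 0"
  shows "dini_le f t D"
proof (rule dini_leI)
  fix e :: real assume "e > 0"
  from assms have "(f has_vector_derivative D) (at t within {0..})"
    by (simp add: has_real_derivative_iff_has_vector_derivative)
  from has_vector_derivative_right_remainder[OF this \<open>t \<ge> 0\<close> \<open>e > 0\<close>]
  show "\<forall>\<^sub>F h in at_right 0. f (t + h) \<le> f t + (D + e) * h"
    by eventually_elim (auto simp: abs_le_iff algebra_simps)
qed

lemma has_vector_derivative_imp_dini_le_norm:
  fixes w :: "real \<Rightarrow> 'a::real_normed_vector"
  assumes "(w has_vector_derivative w') (at t within {0..})" "t \<ge> 0"
  shows "dini_le (\<lambda>s. norm (w s)) t (norm w')"
proof (rule dini_leI)
  fix e :: real assume "e > 0"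
  from has_vector_derivative_right_remainder[OF assms this] eventually_at_right_less[of 0]
  show "\<forall>\<^sub>F h in at_right 0. norm (w (t + h)) \<le> norm (w t) + (norm w' + e) * h"
  proof eventually_elim
    case (elim h)
    have "norm (w (t + h)) \<le> norm (w t + h *\<^sub>R w') + norm (w (t + h) - w t - h *\<^sub>R w')"
      using norm_triangle_ineq[of "w t + h *\<^sub>R w'" "w (t + h) - w t - h *\<^sub>R w'"] by simp
    also have "norm (w t + h *\<^sub>R w') \<le> norm (w t) + norm (h *\<^sub>R w')"
      by (rule norm_triangle_ineq)
    finally show ?case
      using elim
      by (simp add: algebra_simps)
  qed
qed

lemma has_vector_derivative_imp_dini_le_norm_nonzero:
  fixes w :: "real \<Rightarrow> 'a::real_inner"
  assumes "(w has_vector_derivative w') (at t within {0..})" "t \<ge> 0" "w t \<noteq> 0"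
  shows "dini_le (\<lambda>s. norm (w s)) t (inner (w t) w' / norm (w t))"
proof (rule has_real_derivative_imp_dini_le[OF _ \<open>t \<ge> 0\<close>])
  have "((\<lambda>s. norm (w s)) has_derivative (\<lambda>h. inner (h *\<^sub>R w') (sgn (w t)))) (at t within {0..})"
    using has_derivative_in_compose[OF assms(1)[unfolded has_vector_derivative_def]
        has_derivative_at_withinI[OF has_derivative_norm[OF assms(3)]]] by simp
  then show "((\<lambda>s. norm (w s)) has_real_derivative (inner (w t) w' / norm (w t))) (at t within {0..})"
    unfolding has_field_derivative_def
    by (rule has_derivative_eq_rhs) (auto simp: sgn_div_norm inner_commute field_simps)
qed

lemma continuous_within_imp_tendsto_right_increment:
  fixes f :: "real \<Rightarrow> 'a::topological_space"
  assumes "continuous (at t within {0..}) f" "t \<ge> 0"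
  shows "((\<lambda>h. f (t + h)) \<longlongrightarrow> f t) (at_right 0)"
proof -
  have "at_right t \<le> at t within {0..}"
    using \<open>t \<ge> 0\<close> by (intro at_le) auto
  with assms(1) have "(f \<longlongrightarrow> f t) (at_right t)"
    unfolding continuous_within by (rule tendsto_mono[rotated])
  then show ?thesis
    unfolding filterlim_at_right_to_0[of f _ t] by (simp add: add.commute)
qed

lemma dini_le_Max:
  fixes g :: "'p \<Rightarrow> real \<Rightarrow> real"
  assumes "finite P" "P \<noteq> {}" "t \<ge> 0"
    and cont: "\<And>p. p \<in> P \<Longrightarrow> continuous (at t within {0..}) (g p)"
    and active: "\<And>p. p \<in> P \<Longrightarrow> g p t = Max ((\<lambda>p. g p t) ` P) \<Longrightarrow> dini_le (g p) t D"
  shows "dini_le (\<lambda>s. Max ((\<lambda>p. g p s) ` P)) t D"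
proof (rule dini_leI)
  fix e :: real assume "e > 0"
  define G where "G = Max ((\<lambda>p. g p t) ` P)"
  have "\<forall>\<^sub>F h in at_right 0. g p (t + h) \<le> G + (D + e) * h" if "p \<in> P" for p
  proof (cases "g p t = G")
    case True
    with dini_leD[OF active[OF \<open>p \<in> P\<close>] \<open>e > 0\<close>] show ?thesis
      by (simp add: G_def)
  next
    case False
    with \<open>p \<in> P\<close> \<open>finite P\<close> have "g p t < G"
      unfolding G_def by (simp add: order.not_eq_order_implies_strict)
    define \<eta> where "\<eta> = (G - g p t) / 2"
    have "\<eta> > 0" "G = g p t + 2 * \<eta>"
      using \<open>g p t < G\<close> by (simp_all add: \<eta>_def field_simps)
    have "((\<lambda>h. (D + e) * h) \<longlongrightarrow> 0) (at_right 0)"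
      by (intro tendsto_eq_intros) auto
    then have "\<forall>\<^sub>F h in at_right 0. - \<eta> < (D + e) * h"
      using \<open>\<eta> > 0\<close> by (intro order_tendstoD(1)) auto
    moreover have "\<forall>\<^sub>F h in at_right 0. g p (t + h) < g p t + \<eta>"
      using continuous_within_imp_tendsto_right_increment[OF cont[OF \<open>p \<in> P\<close>] \<open>t \<ge> 0\<close>] \<open>\<eta> > 0\<close>
      by (intro order_tendstoD(2)) auto
    ultimately show ?thesis
      by eventually_elim (use \<open>G = g p t + 2 * \<eta>\<close> in linarith)
  qed
  then have "\<forall>\<^sub>F h in at_right 0. \<forall>p\<in>P. g p (t + h) \<le> G + (D + e) * h"
    using \<open>finite P\<close> by (simp add: eventually_ball_finite)
  then show "\<forall>\<^sub>F h in at_right 0. Max ((\<lambda>p. g p (t + h)) ` P) \<le> Max ((\<lambda>p. g p t) ` P) + (D + e) * h"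
    by eventually_elim (use assms(1,2) in \<open>simp add: G_def\<close>)
qed

lemma tendsto_0_if_dini_le_decay:
  fixes V :: "real \<Rightarrow> real"
  assumes cont: "continuous_on {0..} V" and nonneg: "\<And>t. t \<ge> 0 \<Longrightarrow> 0 \<le> V t" and "c > 0"
    and dini: "\<And>t. t \<ge> 0 \<Longrightarrow> dini_le V t (- c * V t)"
  shows "(V \<longlongrightarrow> 0) at_top"
proof -
  have dini_0: "dini_le V t 0" if "t \<ge> 0" for t
    by (rule dini_le_mono[OF dini[OF that]]) (use nonneg[OF that] \<open>c > 0\<close> in simp)
  have small: "\<exists>T\<ge>0. V T < e" if "e > 0" for e
  proof (rule ccontr)
    assume "\<not> (\<exists>T\<ge>0. V T < e)"
    then have large: "e \<le> V t" if "t \<ge> 0" for t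
      using that by force
    \<comment> \<open>While \<open>V \<ge> e\<close>, \<open>V\<close> decreases at rate at least \<open>c e\<close>, which it cannot do forever.\<close>
    have "dini_le (\<lambda>s. V s + c * e * s) t 0" if "t \<ge> 0" for t
    proof -
      have "dini_le (\<lambda>s. V s + c * e * s) t (- c * V t + c * e)"
        by (intro dini_le_add dini[OF that] dini_le_linear)
      then show ?thesis
        by (rule dini_le_mono) (use large[OF that] \<open>c > 0\<close> in simp)
    qed
    then have "V T + c * e * T \<le> V 0 + c * e * 0" if "T \<ge> 0" for T
      using that by (intro decreasing_if_dini_le_0[where f = "\<lambda>s. V s + c * e * s"])
        (auto intro!: continuous_intros cont)
    moreover define T where "T = V 0 / (c * e) + 1"
    moreover have "T \<ge> 0" "c * e * T = V 0 + c * e"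
      using nonneg[of 0] \<open>c > 0\<close> \<open>e > 0\<close> by (simp_all add: T_def field_simps)
    ultimately have "V T + c * e \<le> 0"
      by force
    with nonneg[OF \<open>T \<ge> 0\<close>] \<open>c > 0\<close> \<open>e > 0\<close> show False
      by (smt (verit) mult_pos_pos)
  qed
  show ?thesis
  proof (rule order_tendstoI)
    fix a :: real assume "a < 0"
    with nonneg show "\<forall>\<^sub>F t in at_top. a < V t"
      unfolding eventually_at_top_linorder by (metis order_less_le_trans)
  next
    fix e :: real assume "e > 0"
    with small obtain T where "T \<ge> 0" "V T < e" by blast
    then show "\<forall>\<^sub>F t in at_top. V t < e"
      unfolding eventually_at_top_linorder
      using decreasing_if_dini_le_0[OF cont dini_0 \<open>T \<ge> 0\<close>] by force
  qed
qed

section \<open>Primitive of a decreasing weight\<close>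

locale decreasing_weight =
  fixes \<psi> :: "real \<Rightarrow> real"
  assumes antitone: "\<And>r s. 0 \<le> r \<Longrightarrow> r \<le> s \<Longrightarrow> \<psi> s \<le> \<psi> r"
    and positive: "\<And>r. 0 \<le> r \<Longrightarrow> 0 < \<psi> r"
begin

definition mass :: "real \<Rightarrow> real \<Rightarrow> ennreal" where
  "mass a b = (\<integral>\<^sup>+ r\<in>{a..<b}. ennreal (\<psi> r) \<partial>lborel)"

definition primitive :: "real \<Rightarrow> real" where
  "primitive y = enn2real (mass 0 y)"

lemma measurable_restricted:
  assumes "A \<subseteq> {0..}" "A \<in> sets borel"
  shows "(\<lambda>r. ennreal (\<psi> r) * indicator A r) \<in> borel_measurable lborel"
proof -
  have "mono (\<lambda>r. - \<psi> (max r 0))"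
    unfolding mono_def using antitone by (auto simp: max_def)
  then have "(\<lambda>r. - \<psi> (max r 0)) \<in> borel_measurable borel"
    by (rule borel_measurable_mono)
  then have "(\<lambda>r. ennreal (- (- \<psi> (max r 0))) * indicator A r) \<in> borel_measurable lborel"
    using \<open>A \<in> sets borel\<close> by measurable
  then show ?thesis
    by (rule measurable_cong[THEN iffD1, rotated]) (use \<open>A \<subseteq> {0..}\<close> in \<open>auto simp: indicator_def\<close>)
qed

lemma mass_le:
  assumes "0 \<le> a" "a \<le> b"
  shows "mass a b \<le> ennreal (\<psi> a * (b - a))"
proof -
  have "mass a b \<le> (\<integral>\<^sup>+ r. ennreal (\<psi> a) * indicator {a..<b} r \<partial>lborel)"
    unfolding mass_def
    by (intro nn_integral_mono) (auto simp: indicator_def intro!: ennreal_leI antitone assms)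
  also have "\<dots> = ennreal (\<psi> a * (b - a))"
    using assms positive[of a] by (simp add: nn_integral_cmult_indicator ennreal_mult)
  finally show ?thesis .
qed

lemma mass_finite: "0 \<le> a \<Longrightarrow> a \<le> b \<Longrightarrow> mass a b < top"
  using le_less_trans[OF mass_le ennreal_less_top] .

lemma mass_split:
  assumes "0 \<le> a" "a \<le> b" "b \<le> c"
  shows "mass a c = mass a b + mass b c"
proof -
  have "mass a c = (\<integral>\<^sup>+ r. ennreal (\<psi> r) * indicator {a..<b} r + ennreal (\<psi> r) * indicator {b..<c} r \<partial>lborel)"
    unfolding mass_def using assms by (intro nn_integral_cong) (auto simp: indicator_def)
  also have "\<dots> = mass a b + mass b c"
    unfolding mass_def using assms by (intro nn_integral_add measurable_restricted) auto
  finally show ?thesis .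
qed

lemma mass_mono: "b \<le> c \<Longrightarrow> mass a b \<le> mass a c"
  unfolding mass_def by (intro nn_integral_mono) (auto simp: indicator_def)

lemma primitive_diff:
  assumes "0 \<le> y" "y \<le> y'"
  shows "primitive y' - primitive y = enn2real (mass y y')"
  unfolding primitive_def using assms mass_split[of 0 y y'] mass_finite[of 0 y] mass_finite[of y y']
  by (simp add: enn2real_plus)

lemma primitive_increment_le:
  assumes "0 \<le> y" "0 \<le> y'" "y' \<le> y + d" "0 \<le> d"
  shows "primitive y' \<le> primitive y + \<psi> y * d"
proof (cases "y \<le> y'")
  case True
  have "primitive y' - primitive y \<le> enn2real (ennreal (\<psi> y * (y' - y)))"
    unfolding primitive_diff[OF \<open>0 \<le> y\<close> True] by (rule enn2real_mono[OF mass_le]) (use True assms in auto)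
  also have "\<dots> \<le> \<psi> y * d"
    using assms True positive[of y] by simp
  finally show ?thesis by simp
next
  case False
  then have "primitive y' \<le> primitive y"
    using primitive_diff[OF \<open>0 \<le> y'\<close>, of y] enn2real_nonneg[of "mass y' y"] by linarith
  moreover have "0 \<le> \<psi> y * d"
    using assms False positive[of y] by simp
  ultimately show ?thesis by simp
qed

lemma continuous_on_primitive: "continuous_on {0..} primitive"
proof (rule lipschitz_on_continuous_on)
  show "lipschitz_on (\<psi> 0) {0..} primitive"
  proof (rule lipschitz_onI)
    have ordered: "dist (primitive y) (primitive y') \<le> \<psi> 0 * dist y y'" if "0 \<le> y" "y \<le> y'" for y y'
    proof -
      have "primitive y' - primitive y \<le> \<psi> y * (y' - y)"
        using primitive_increment_le[of y y' "y' - y"] that by simp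
      also have "\<dots> \<le> \<psi> 0 * (y' - y)"
        using that antitone[of 0 y] by (intro mult_right_mono) auto
      moreover have "primitive y \<le> primitive y'"
        using primitive_diff[OF that] enn2real_nonneg[of "mass y y'"] by linarith
      then have "dist (primitive y) (primitive y') = primitive y' - primitive y"
        by (simp add: dist_real_def)
      ultimately show ?thesis
        using that by (simp add: dist_real_def)
    qed
    then show "dist (primitive y) (primitive y') \<le> \<psi> 0 * dist y y'" if "y \<in> {0..}" "y' \<in> {0..}" for y y'
      using that by (metis atLeast_iff dist_commute linear)
    show "0 \<le> \<psi> 0"
      using positive[of 0] by simp
  qed
qed

lemma dini_le_primitive_comp:
  assumes "dini_le X t D" "D \<ge> 0" "t \<ge> 0" "\<And>s. s \<ge> 0 \<Longrightarrow> 0 \<le> X s"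
  shows "dini_le (\<lambda>s. primitive (X s)) t (\<psi> (X t) * D)"
proof (rule dini_leI)
  fix e :: real assume "e > 0"
  have "\<psi> (X t) > 0"
    using positive assms(3,4) by blast
  with \<open>e > 0\<close> have "e / \<psi> (X t) > 0" by simp
  from dini_leD[OF assms(1) this] eventually_at_right_less[of 0]
  show "\<forall>\<^sub>F h in at_right 0. primitive (X (t + h)) \<le> primitive (X t) + (\<psi> (X t) * D + e) * h"
  proof eventually_elim
    case (elim h)
    have "primitive (X (t + h)) \<le> primitive (X t) + \<psi> (X t) * ((D + e / \<psi> (X t)) * h)"
      using elim assms(2,3,4) \<open>e / \<psi> (X t) > 0\<close> by (intro primitive_increment_le) auto
    also have "\<dots> = primitive (X t) + (\<psi> (X t) * D + e) * h"
      using \<open>\<psi> (X t) > 0\<close> by (simp add: field_simps)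
    finally show ?case .
  qed
qed

lemma mass_atLeast_eq_SUP:
  assumes "0 \<le> a"
  shows "(\<integral>\<^sup>+ r\<in>{a..}. ennreal (\<psi> r) \<partial>lborel) = (SUP n. mass a (a + real n))"
proof -
  have "(\<integral>\<^sup>+ r\<in>{a..}. ennreal (\<psi> r) \<partial>lborel)
      = (\<integral>\<^sup>+ r. (SUP n. ennreal (\<psi> r) * indicator {a..<a + real n} r) \<partial>lborel)"
  proof (intro nn_integral_cong antisym)
    fix r :: real
    show "(SUP n. ennreal (\<psi> r) * indicator {a..<a + real n} r) \<le> ennreal (\<psi> r) * indicator {a..} r"
      by (intro SUP_least) (auto simp: indicator_def)
    obtain n :: nat where "r - a < real n"
      using reals_Archimedean2 by blast
    then have "ennreal (\<psi> r) * indicator {a..} r = ennreal (\<psi> r) * indicator {a..<a + real n} r"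
      by (auto simp: indicator_def)
    also have "\<dots> \<le> (SUP n. ennreal (\<psi> r) * indicator {a..<a + real n} r)"
      by (rule SUP_upper) simp
    finally show "ennreal (\<psi> r) * indicator {a..} r \<le> (SUP n. ennreal (\<psi> r) * indicator {a..<a + real n} r)" .
  qed
  also have "\<dots> = (SUP n. mass a (a + real n))"
    unfolding mass_def
  proof (rule nn_integral_monotone_convergence_SUP)
    show "incseq (\<lambda>n r. ennreal (\<psi> r) * indicator {a..<a + real n} r)"
      by (intro incseq_SucI le_funI) (auto simp: indicator_def)
    show "\<And>n. (\<lambda>r. ennreal (\<psi> r) * indicator {a..<a + real n} r) \<in> borel_measurable lborel"
      using assms by (intro measurable_restricted) auto
  qed
  finally show ?thesis .
qed

lemma lyapunov_bound:
  fixes X V :: "real \<Rightarrow> real"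
  assumes cont_X: "continuous_on {0..} X" and cont_V: "continuous_on {0..} V"
    and X_nonneg: "\<And>t. t \<ge> 0 \<Longrightarrow> 0 \<le> X t" and V_nonneg: "\<And>t. t \<ge> 0 \<Longrightarrow> 0 \<le> V t"
    and dini_X: "\<And>t. t \<ge> 0 \<Longrightarrow> dini_le X t (V t)"
    and dini_V: "\<And>t. t \<ge> 0 \<Longrightarrow> dini_le V t (- K * \<psi> (X t) * V t)"
    and small: "ennreal (V 0) < ennreal K * (\<integral>\<^sup>+ r\<in>{X 0..}. ennreal (\<psi> r) \<partial>lborel)"
  shows "K > 0" and "\<exists>R. \<forall>t\<ge>0. X t \<le> R"
proof -
  show "K > 0"
  proof (rule ccontr)
    assume "\<not> K > 0"
    then have "ennreal K = 0" by (simp add: ennreal_eq_0_iff)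
    with small show False by simp
  qed
  have lyapunov: "V t + K * primitive (X t) \<le> V 0 + K * primitive (X 0)" if "t \<ge> 0" for t
  proof (rule decreasing_if_dini_le_0[where f = "\<lambda>s. V s + K * primitive (X s)"])
    show "continuous_on {0..} (\<lambda>s. V s + K * primitive (X s))"
      by (intro continuous_intros cont_V continuous_on_compose2[OF continuous_on_primitive cont_X])
        (auto intro: X_nonneg)
    fix s :: real assume "s \<ge> 0"
    have "dini_le (\<lambda>s. V s + K * primitive (X s)) s (- K * \<psi> (X s) * V s + K * (\<psi> (X s) * V s))"
      using \<open>K > 0\<close> \<open>s \<ge> 0\<close> V_nonneg X_nonneg
      by (intro dini_le_add dini_V dini_le_cmult dini_le_primitive_comp dini_X) auto
    then show "dini_le (\<lambda>s. V s + K * primitive (X s)) s 0"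
      by simp
  qed (use that in auto)
  from small obtain n :: nat where n: "ennreal (V 0) < ennreal K * mass (X 0) (X 0 + real n)"
    unfolding mass_atLeast_eq_SUP[OF X_nonneg[OF order_refl]] SUP_mult_left_ennreal less_SUP_iff
    by blast
  have "X t \<le> X 0 + real n" if "t \<ge> 0" for t
  proof (rule ccontr)
    assume "\<not> X t \<le> X 0 + real n"
    then have far: "X 0 + real n \<le> X t" "X 0 \<le> X t" by auto
    have "K * enn2real (mass (X 0) (X t)) \<le> V 0"
      using lyapunov[OF that] V_nonneg[OF that] primitive_diff[OF X_nonneg[OF order_refl] far(2)]
      by (simp add: algebra_simps)
    then have "ennreal K * mass (X 0) (X t) \<le> ennreal (V 0)"
      using mass_finite[OF X_nonneg[OF order_refl] far(2)] \<open>K > 0\<close>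
      by (metis ennreal_enn2real ennreal_leI ennreal_mult' less_imp_le)
    moreover have "ennreal K * mass (X 0) (X 0 + real n) \<le> ennreal K * mass (X 0) (X t)"
      using far(1) by (intro mult_left_mono mass_mono) auto
    ultimately show False
      using n by simp
  qed
  then show "\<exists>R. \<forall>t\<ge>0. X t \<le> R" by blast
qed

lemma flocking_if_lyapunov:
  fixes X V :: "real \<Rightarrow> real"
  assumes cont_X: "continuous_on {0..} X" and cont_V: "continuous_on {0..} V"
    and X_nonneg: "\<And>t. t \<ge> 0 \<Longrightarrow> 0 \<le> X t" and V_nonneg: "\<And>t. t \<ge> 0 \<Longrightarrow> 0 \<le> V t"
    and dini_X: "\<And>t. t \<ge> 0 \<Longrightarrow> dini_le X t (V t)"
    and dini_V: "\<And>t. t \<ge> 0 \<Longrightarrow> dini_le V t (- K * \<psi> (X t) * V t)"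
    and small: "ennreal (V 0) < ennreal K * (\<integral>\<^sup>+ r\<in>{X 0..}. ennreal (\<psi> r) \<partial>lborel)"
  shows "bdd_above (X ` {0..})" and "(V \<longlongrightarrow> 0) at_top"
proof -
  note bound = lyapunov_bound[OF assms]
  then obtain R where R: "\<And>t. t \<ge> 0 \<Longrightarrow> X t \<le> R" by blast
  then show "bdd_above (X ` {0..})"
    by (auto simp: bdd_above_def)
  have "R \<ge> 0"
    using R[of 0] X_nonneg[of 0] by simp
  show "(V \<longlongrightarrow> 0) at_top"
  proof (rule tendsto_0_if_dini_le_decay[OF cont_V V_nonneg])
    show "K * \<psi> R > 0"
      using bound(1) positive[OF \<open>R \<ge> 0\<close>] by simp
    fix t :: real assume "t \<ge> 0"
    have "K * \<psi> R * V t \<le> K * \<psi> (X t) * V t"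
      using bound(1) antitone[OF X_nonneg R] V_nonneg \<open>t \<ge> 0\<close>
      by (intro mult_right_mono mult_left_mono) auto
    then show "dini_le V t (- (K * \<psi> R) * V t)"
      by (intro dini_le_mono[OF dini_V[OF \<open>t \<ge> 0\<close>]]) simp
  qed
qed

end

section \<open>Diameters along a solution\<close>

lemma continuous_on_Max_image:
  fixes g :: "'p \<Rightarrow> 'b::topological_space \<Rightarrow> real"
  assumes "finite P" "P \<noteq> {}" "\<And>p. p \<in> P \<Longrightarrow> continuous_on S (g p)"
  shows "continuous_on S (\<lambda>s. Max ((\<lambda>p. g p s) ` P))"
  using assms
proof (induction P rule: finite_ne_induct)
  case (insert p P)
  then have "continuous_on S (\<lambda>s. max (g p s) (Max ((\<lambda>p. g p s) ` P)))"
    by (intro continuous_on_max) auto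
  with insert show ?case by simp
qed simp

lemma diamX_eq_Max:
  assumes "N \<ge> 1"
  shows "diamX N f t = Max ((\<lambda>p. norm (f (fst p) t - f (snd p) t)) ` ({..<N} \<times> {..<N}))"
  unfolding diamX_def using assms by (intro cSup_eq_Max) (auto simp: lessThan_empty_iff)

lemma norm_le_diamX:
  assumes "i < N" "j < N"
  shows "norm (f i t - f j t) \<le> diamX N f t"
  unfolding diamX_def
  by (rule cSUP_upper2[where x = "(i, j)"]) (use assms in \<open>auto intro!: bdd_above_finite\<close>)

lemma diamX_nonneg: "N \<ge> 1 \<Longrightarrow> 0 \<le> diamX N f t"
  using norm_le_diamX[of 0 N 0 f t] by simp

lemma continuous_on_diamX:
  assumes "N \<ge> 1" "\<And>i. i < N \<Longrightarrow> continuous_on S (f i)"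
  shows "continuous_on S (diamX N f)"
proof -
  have "continuous_on S (\<lambda>t. Max ((\<lambda>p. norm (f (fst p) t - f (snd p) t)) ` ({..<N} \<times> {..<N})))"
    using assms by (intro continuous_on_Max_image) (auto simp: lessThan_empty_iff intro!: continuous_intros)
  then show ?thesis
    by (simp add: diamX_eq_Max[OF assms(1)])
qed

lemma dini_le_diamX:
  assumes "N \<ge> 1" "t \<ge> 0" "\<And>i. i < N \<Longrightarrow> continuous_on {0..} (f i)"
    and active: "\<And>i j. i < N \<Longrightarrow> j < N \<Longrightarrow> norm (f i t - f j t) = diamX N f t \<Longrightarrow>
      dini_le (\<lambda>s. norm (f i s - f j s)) t D"
  shows "dini_le (diamX N f) t D"
proof -
  have "dini_le (\<lambda>s. Max ((\<lambda>p. norm (f (fst p) s - f (snd p) s)) ` ({..<N} \<times> {..<N}))) t D"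
  proof (rule dini_le_Max)
    fix p assume "p \<in> {..<N} \<times> {..<N}"
    with assms(3) have "continuous_on {0..} (\<lambda>s. norm (f (fst p) s - f (snd p) s))"
      by (auto intro!: continuous_intros)
    with \<open>t \<ge> 0\<close> show "continuous (at t within {0..}) (\<lambda>s. norm (f (fst p) s - f (snd p) s))"
      by (simp add: continuous_on_eq_continuous_within)
    assume "norm (f (fst p) t - f (snd p) t) = Max ((\<lambda>p. norm (f (fst p) t - f (snd p) t)) ` ({..<N} \<times> {..<N}))"
    with \<open>p \<in> _\<close> show "dini_le (\<lambda>s. norm (f (fst p) s - f (snd p) s)) t D"
      by (intro active) (auto simp: diamX_eq_Max[OF assms(1)])
  qed (use assms(1,2) in \<open>auto simp: lessThan_empty_iff\<close>)
  moreover have "diamX N f = (\<lambda>s. Max ((\<lambda>p. norm (f (fst p) s - f (snd p) s)) ` ({..<N} \<times> {..<N})))"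
    using diamX_eq_Max[OF assms(1)] by blast
  ultimately show ?thesis
    by simp
qed

definition pair_coupling :: "nat \<Rightarrow> (nat \<Rightarrow> nat \<Rightarrow> real) \<Rightarrow> nat \<Rightarrow> nat \<Rightarrow> real" where
  "pair_coupling N M i j = M i j + M j i + (\<Sum>k\<in>{..<N} - {i, j}. min (M i k) (M j k))"

lemma chi_le_pair_coupling:
  assumes "i < N" "j < N" "i \<noteq> j"
  shows "chi N M \<le> pair_coupling N M i j"
proof -
  have "{pair_coupling N M i j | i j. i < N \<and> j < N \<and> i \<noteq> j}
      \<subseteq> (\<lambda>(i, j). pair_coupling N M i j) ` ({..<N} \<times> {..<N})"
    by auto
  then have "finite {pair_coupling N M i j | i j. i < N \<and> j < N \<and> i \<noteq> j}"
    by (rule finite_subset) simp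
  with assms show ?thesis
    unfolding chi_def pair_coupling_def[symmetric] by (intro Min_le) auto
qed

lemma scaled_chi_le_pair_coupling:
  assumes "c \<ge> 0" and le: "\<And>k l. k < N \<Longrightarrow> l < N \<Longrightarrow> k \<noteq> l \<Longrightarrow> c * M k l \<le> Q k l"
    and "i < N" "j < N" "i \<noteq> j"
  shows "c * chi N M \<le> pair_coupling N Q i j"
proof -
  have "c * chi N M \<le> c * pair_coupling N M i j"
    using assms by (intro mult_left_mono chi_le_pair_coupling)
  also have "\<dots> = pair_coupling N (\<lambda>k l. c * M k l) i j"
    using \<open>c \<ge> 0\<close> by (simp add: pair_coupling_def min_mult_distrib_left algebra_simps sum_distrib_left)
  also have "\<dots> \<le> pair_coupling N Q i j"
    unfolding pair_coupling_def using assms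
    by (intro add_mono sum_mono min.mono le) auto
  finally show ?thesis .
qed

lemma inner_consensus_le:
  fixes u :: "nat \<Rightarrow> 'a::real_inner" and Q :: "nat \<Rightarrow> nat \<Rightarrow> real"
  assumes ij: "i < N" "j < N" "i \<noteq> j"
    and diam: "\<And>k l. k < N \<Longrightarrow> l < N \<Longrightarrow> norm (u k - u l) \<le> norm (u i - u j)"
  shows "inner (u i - u j) ((\<Sum>k\<in>{..<N} - {i}. Q i k *\<^sub>R (u k - u i)) - (\<Sum>k\<in>{..<N} - {j}. Q j k *\<^sub>R (u k - u j)))
      \<le> - pair_coupling N Q i j * (norm (u i - u j))\<^sup>2"
proof -
  define w where "w = u i - u j"
  define p where "p k = inner w (u k)" for k
  define R where "R = {..<N} - {i, j}"
  have width: "p i - p j = (norm w)\<^sup>2"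
    by (simp add: p_def w_def power2_norm_eq_inner inner_diff_right)
  have between: "p j \<le> p k \<and> p k \<le> p i" if "k < N" for k
  proof
    have "p k - p j = inner w (u k - u j)" by (simp add: p_def inner_diff_right)
    also have "\<dots> \<le> norm w * norm (u k - u j)" by (rule norm_cauchy_schwarz)
    also have "\<dots> \<le> norm w * norm w" using diam[OF that ij(2)] by (simp add: w_def mult_left_mono)
    finally show "p k \<le> p i" using width by (simp add: power2_eq_square)
    have "p i - p k = inner w (u i - u k)" by (simp add: p_def inner_diff_right)
    also have "\<dots> \<le> norm w * norm (u i - u k)" by (rule norm_cauchy_schwarz)
    also have "\<dots> \<le> norm w * norm w" using diam[OF ij(1) that] by (simp add: w_def mult_left_mono)
    finally show "p j \<le> p k" using width by (simp add: power2_eq_square)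
  qed
  have split: "{..<N} - {i} = insert j R" "{..<N} - {j} = insert i R" "i \<notin> R" "j \<notin> R" "finite R"
    using ij by (auto simp: R_def)
  have "inner w ((\<Sum>k\<in>{..<N} - {i}. Q i k *\<^sub>R (u k - u i)) - (\<Sum>k\<in>{..<N} - {j}. Q j k *\<^sub>R (u k - u j)))
      = (Q i j * (p j - p i) + (\<Sum>k\<in>R. Q i k * (p k - p i))) - (Q j i * (p i - p j) + (\<Sum>k\<in>R. Q j k * (p k - p j)))"
    unfolding split(1,2) using split(3-5)
    by (simp add: inner_diff_right inner_add_right inner_sum_right p_def)
  also have "\<dots> = - (Q i j + Q j i) * (norm w)\<^sup>2 + (\<Sum>k\<in>R. Q i k * (p k - p i) - Q j k * (p k - p j))"
    using width by (simp only: sum_subtractf) (simp add: algebra_simps)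
  also have "\<dots> \<le> - (Q i j + Q j i) * (norm w)\<^sup>2 + (\<Sum>k\<in>R. - min (Q i k) (Q j k) * (norm w)\<^sup>2)"
  proof (intro add_left_mono sum_mono)
    fix k assume "k \<in> R"
    then have "p j \<le> p k" "p k \<le> p i"
      using between by (auto simp: R_def)
    then have "min (Q i k) (Q j k) * (p i - p k) \<le> Q i k * (p i - p k)"
      and "min (Q i k) (Q j k) * (p k - p j) \<le> Q j k * (p k - p j)"
      by (auto intro: mult_right_mono)
    then show "Q i k * (p k - p i) - Q j k * (p k - p j) \<le> - min (Q i k) (Q j k) * (norm w)\<^sup>2"
      unfolding width[symmetric] by (simp add: algebra_simps)
  qed
  also have "\<dots> = - pair_coupling N Q i j * (norm w)\<^sup>2"
    by (simp add: pair_coupling_def R_def sum_distrib_left sum_distrib_right algebra_simps sum_negf)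
  finally show ?thesis
    by (simp add: w_def)
qed

lemma solution_continuous:
  assumes "is_solution N \<alpha> Q x v" "i < N"
  shows "continuous_on {0..} (x i)" "continuous_on {0..} (v i)"
  using assms unfolding is_solution_def continuous_on_eq_continuous_within
  by (auto intro: has_vector_derivative_continuous)

lemma solution_dini_le_diam_position:
  fixes x v :: "nat \<Rightarrow> real \<Rightarrow> 'a::euclidean_space"
  assumes sol: "is_solution N \<alpha> Q x v" and "N \<ge> 1" "t \<ge> 0"
  shows "dini_le (diamX N x) t (diamX N v t)"
proof (rule dini_le_diamX[OF \<open>N \<ge> 1\<close> \<open>t \<ge> 0\<close> solution_continuous(1)[OF sol]])
  fix i j assume "i < N" "j < N"
  with sol \<open>t \<ge> 0\<close> have "((\<lambda>s. x i s - x j s) has_vector_derivative v i t - v j t) (at t within {0..})"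
    unfolding is_solution_def by (intro has_vector_derivative_diff) auto
  from has_vector_derivative_imp_dini_le_norm[OF this \<open>t \<ge> 0\<close>]
  show "dini_le (\<lambda>s. norm (x i s - x j s)) t (diamX N v t)"
    by (rule dini_le_mono) (rule norm_le_diamX[OF \<open>i < N\<close> \<open>j < N\<close>])
qed

lemma solution_dini_le_diam_velocity:
  fixes x v :: "nat \<Rightarrow> real \<Rightarrow> 'a::euclidean_space"
  assumes sol: "is_solution N \<alpha> Q x v" and "N \<ge> 1" "t \<ge> 0" "\<alpha> \<ge> 0"
    and coupling: "\<And>i j. i < N \<Longrightarrow> j < N \<Longrightarrow> i \<noteq> j \<Longrightarrow> \<kappa> \<le> pair_coupling N (Q t) i j"
  shows "dini_le (diamX N v) t (- \<alpha> * \<kappa> * diamX N v t)"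
proof (rule dini_le_diamX[OF \<open>N \<ge> 1\<close> \<open>t \<ge> 0\<close> solution_continuous(2)[OF sol]])
  define F where "F k = \<alpha> *\<^sub>R (\<Sum>l\<in>{..<N} - {k}. Q t k l *\<^sub>R (v l t - v k t))" for k
  fix i j assume "i < N" "j < N" and active: "norm (v i t - v j t) = diamX N v t"
  have "(v k has_vector_derivative F k) (at t within {0..})" if "k < N" for k
    using sol that \<open>t \<ge> 0\<close> unfolding is_solution_def F_def by blast
  then have deriv: "((\<lambda>s. v i s - v j s) has_vector_derivative F i - F j) (at t within {0..})"
    using \<open>i < N\<close> \<open>j < N\<close> by (intro has_vector_derivative_diff)
  show "dini_le (\<lambda>s. norm (v i s - v j s)) t (- \<alpha> * \<kappa> * diamX N v t)"
  proof (cases "diamX N v t = 0")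
    case True
    then have same: "v l t - v k t = 0" if "k < N" "l < N" for k l
      using norm_le_diamX[OF that(2,1), of v t] by simp
    have "F k = 0" if "k < N" for k
    proof -
      have "(\<Sum>l\<in>{..<N} - {k}. Q t k l *\<^sub>R (v l t - v k t)) = 0"
      proof (intro sum.neutral ballI)
        fix l assume "l \<in> {..<N} - {k}"
        with same[OF that, of l] show "Q t k l *\<^sub>R (v l t - v k t) = 0"
          by simp
      qed
      then show ?thesis by (simp add: F_def)
    qed
    then have "F i - F j = 0"
      using \<open>i < N\<close> \<open>j < N\<close> by simp
    with has_vector_derivative_imp_dini_le_norm[OF deriv \<open>t \<ge> 0\<close>] True
    show ?thesis by simp
  next
    case False
    with active have "v i t - v j t \<noteq> 0" "i \<noteq> j" by auto
    have diam: "norm (v k t - v l t) \<le> norm (v i t - v j t)" if "k < N" "l < N" for k l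
      unfolding active by (rule norm_le_diamX[OF that])
    have "inner (v i t - v j t) (F i - F j) = \<alpha> * inner (v i t - v j t)
        ((\<Sum>k\<in>{..<N} - {i}. Q t i k *\<^sub>R (v k t - v i t)) - (\<Sum>k\<in>{..<N} - {j}. Q t j k *\<^sub>R (v k t - v j t)))"
      unfolding F_def scaleR_diff_right[symmetric] inner_scaleR_right ..
    also have "\<dots> \<le> \<alpha> * (- pair_coupling N (Q t) i j * (norm (v i t - v j t))\<^sup>2)"
      using inner_consensus_le[of i N j "\<lambda>k. v k t", OF \<open>i < N\<close> \<open>j < N\<close> \<open>i \<noteq> j\<close> diam] \<open>\<alpha> \<ge> 0\<close>
      by (rule mult_left_mono)
    also have "\<dots> \<le> - \<alpha> * \<kappa> * (norm (v i t - v j t))\<^sup>2"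
      using coupling[OF \<open>i < N\<close> \<open>j < N\<close> \<open>i \<noteq> j\<close>] \<open>\<alpha> \<ge> 0\<close>
      by (simp add: mult.assoc mult_left_mono mult_right_mono)
    finally have "inner (v i t - v j t) (F i - F j) / norm (v i t - v j t) \<le> - \<alpha> * \<kappa> * norm (v i t - v j t)"
      using \<open>v i t - v j t \<noteq> 0\<close> by (simp add: pos_divide_le_eq power2_eq_square)
    then have "inner (v i t - v j t) (F i - F j) / norm (v i t - v j t) \<le> - \<alpha> * \<kappa> * diamX N v t"
      by (simp only: active)
    with has_vector_derivative_imp_dini_le_norm_nonzero[OF deriv \<open>t \<ge> 0\<close> \<open>v i t - v j t \<noteq> 0\<close>]
    show ?thesis by (rule dini_le_mono)
  qed
qed

context decreasing_weight
begin

lemma flocks_if_weights_bounded_below: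
  fixes x v :: "nat \<Rightarrow> real \<Rightarrow> 'a::euclidean_space" and M :: "nat \<Rightarrow> nat \<Rightarrow> real"
  assumes "N \<ge> 1" "\<alpha> \<ge> 0"
    and weights: "\<And>t k l. t \<ge> 0 \<Longrightarrow> k < N \<Longrightarrow> l < N \<Longrightarrow> k \<noteq> l \<Longrightarrow> \<psi> (diamX N x t) * M k l \<le> Q t k l"
    and sol: "is_solution N \<alpha> Q x v"
    and small: "ennreal (diamX N v 0) < ennreal (\<alpha> * chi N M) * (\<integral>\<^sup>+ r\<in>{diamX N x 0..}. ennreal (\<psi> r) \<partial>lborel)"
  shows "flocks N x v"
proof -
  have dini_V: "dini_le (diamX N v) t (- (\<alpha> * chi N M) * \<psi> (diamX N x t) * diamX N v t)" if "t \<ge> 0" for t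
  proof -
    have "0 \<le> \<psi> (diamX N x t)"
      using positive[OF diamX_nonneg[OF \<open>N \<ge> 1\<close>]] less_imp_le by blast
    then have "\<psi> (diamX N x t) * chi N M \<le> pair_coupling N (Q t) i j" if "i < N" "j < N" "i \<noteq> j" for i j
      using weights[OF \<open>t \<ge> 0\<close>] that by (intro scaled_chi_le_pair_coupling)
    from solution_dini_le_diam_velocity[OF sol \<open>N \<ge> 1\<close> \<open>t \<ge> 0\<close> \<open>\<alpha> \<ge> 0\<close> this]
    show ?thesis by (simp add: ac_simps)
  qed
  have "continuous_on {0..} (diamX N x)" "continuous_on {0..} (diamX N v)"
    using \<open>N \<ge> 1\<close> solution_continuous[OF sol] by (auto intro: continuous_on_diamX)
  from flocking_if_lyapunov[OF this diamX_nonneg diamX_nonneg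
      solution_dini_le_diam_position[OF sol] dini_V small] \<open>N \<ge> 1\<close>
  show ?thesis
    unfolding flocks_def by simp
qed

lemma Q_CS_ge_diam_weight:
  assumes "A k l \<ge> 0" "k < N" "l < N"
  shows "\<psi> (diamX N x t) * A k l \<le> Q_CS A \<psi> x t k l"
proof -
  have "\<psi> (diamX N x t) \<le> \<psi> (norm (x l t - x k t))"
    using norm_le_diamX[OF assms(3,2)] by (intro antitone) auto
  with assms(1) show ?thesis
    unfolding Q_CS_def by (simp add: mult.commute mult_left_mono)
qed

lemma Q_MT_ge_diam_weight:
  assumes "\<psi> 0 \<le> 1" and A_nonneg: "\<And>m. m < N \<Longrightarrow> A k m \<ge> 0" and "a k \<ge> 0" "k < N" "l < N" "k \<noteq> l"
  shows "\<psi> (diamX N x t) * B_mat N A a k l \<le> Q_MT N A a \<psi> x t k l"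
proof (cases "A k l = 0")
  case True
  then show ?thesis by (simp add: B_mat_def Q_MT_def)
next
  case False
  define w where "w m = \<psi> (norm (x k t - x m t))" for m
  define D where "D = a k + (\<Sum>m\<in>{..<N} - {k}. A k m)"
  define D' where "D' = a k + (\<Sum>m\<in>{..<N} - {k}. A k m * w m)"
  have w: "0 < w m" "w m \<le> 1" "\<psi> (diamX N x t) \<le> w m" if "m < N" for m
    using positive[of "norm (x k t - x m t)"] antitone[of 0 "norm (x k t - x m t)"] \<open>\<psi> 0 \<le> 1\<close>
      antitone[OF _ norm_le_diamX[OF \<open>k < N\<close> that]]
    by (auto simp: w_def)
  have "0 < A k l * w l"
    using False A_nonneg[OF \<open>l < N\<close>] w(1)[OF \<open>l < N\<close>] by simp
  also have "A k l * w l \<le> (\<Sum>m\<in>{..<N} - {k}. A k m * w m)"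
    using \<open>l < N\<close> \<open>k \<noteq> l\<close> A_nonneg w(1) by (intro member_le_sum) (auto simp: less_imp_le)
  also have "\<dots> \<le> D'"
    using \<open>a k \<ge> 0\<close> by (simp add: D'_def)
  finally have "0 < D'" .
  have "D' \<le> D"
    unfolding D_def D'_def using A_nonneg w(2) by (intro add_left_mono sum_mono) (auto intro: mult_left_le)
  have "\<psi> (diamX N x t) * B_mat N A a k l = A k l * \<psi> (diamX N x t) / D"
    by (simp add: B_mat_def D_def)
  also have "\<dots> \<le> A k l * w l / D"
    using A_nonneg[OF \<open>l < N\<close>] w(3)[OF \<open>l < N\<close>] \<open>0 < D'\<close> \<open>D' \<le> D\<close>
    by (intro divide_right_mono mult_left_mono) auto
  also have "\<dots> \<le> A k l * w l / D'"
    using A_nonneg[OF \<open>l < N\<close>] w(1)[OF \<open>l < N\<close>] \<open>0 < D'\<close> \<open>D' \<le> D\<close>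
    by (intro divide_left_mono) auto
  also have "\<dots> = Q_MT N A a \<psi> x t k l"
    by (simp add: Q_MT_def D'_def w_def)
  finally show ?thesis .
qed

end

theorem theorem3p6:
  fixes N :: nat and \<alpha> :: real
    and A :: "nat \<Rightarrow> nat \<Rightarrow> real" and \<psi> :: "real \<Rightarrow> real"
  assumes N_pos: "N \<ge> 1"
    and alpha_pos: "\<alpha> > 0"
    and A_nonneg: "\<And>i j. i < N \<Longrightarrow> j < N \<Longrightarrow> A i j \<ge> 0"
    and psi_mono: "\<And>r1 r2. r1 \<ge> 0 \<Longrightarrow> r2 \<ge> 0 \<Longrightarrow> (r1 - r2) * (\<psi> r1 - \<psi> r2) \<le> 0"
    and psi_pos: "\<And>r. r \<ge> 0 \<Longrightarrow> 0 < \<psi> r \<and> \<psi> r \<le> \<psi> 0"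
    and psi0: "\<psi> 0 \<le> 1"
    and scrambling: "\<And>i j. i < N \<Longrightarrow> j < N \<Longrightarrow> i \<noteq> j \<Longrightarrow>
        A i j > 0 \<or> A j i > 0 \<or> (\<exists>k<N. A i k > 0 \<and> A j k > 0)"
  shows
    "(\<forall>(x :: nat \<Rightarrow> real \<Rightarrow> 'a::euclidean_space) v.
        is_solution N \<alpha> (Q_CS A \<psi> x) x v \<and>
        ennreal (diamX N v 0) < ennreal (\<alpha> * chi N A) * (\<integral>\<^sup>+ r\<in>{diamX N x 0..}. ennreal (\<psi> r) \<partial>lborel)
        \<longrightarrow> flocks N x v)
     \<and>
     (\<forall>(a :: nat \<Rightarrow> real) (x :: nat \<Rightarrow> real \<Rightarrow> 'a) v.
        (\<forall>i<N. a i \<ge> 0) \<and>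
        (\<forall>i<N. (\<forall>j<N. j \<noteq> i \<longrightarrow> A i j = 0) \<longrightarrow> a i > 0) \<and>
        is_solution N \<alpha> (Q_MT N A a \<psi> x) x v \<and>
        ennreal (diamX N v 0) < ennreal (\<alpha> * chi N (B_mat N A a)) * (\<integral>\<^sup>+ r\<in>{diamX N x 0..}. ennreal (\<psi> r) \<partial>lborel)
        \<longrightarrow> flocks N x v)"
proof -
  interpret decreasing_weight \<psi>
  proof
    show "\<psi> s \<le> \<psi> r" if "0 \<le> r" "r \<le> s" for r s
      using psi_mono[of r s] that by (cases "r = s") (auto simp: mult_le_0_iff)
    show "0 < \<psi> r" if "0 \<le> r" for r
      using psi_pos[OF that] by blast
  qed
  have "\<alpha> \<ge> 0"
    using alpha_pos by simp
  \<comment> \<open>Scrambling only makes \<open>\<chi> > 0\<close>, and for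
    \<open>\<chi> \<le> 0\<close> the smallness hypothesis is false since \<open>ennreal\<close> sends nonpositive reals to \<open>0\<close>.
    If a normalisation \<open>a i + \<dots>\<close> vanishes, row \<open>i\<close> of \<open>A\<close> vanishes off the diagonal,
    so with \<open>x / 0 = 0\<close> row \<open>i\<close> of both \<open>Q_MT\<close> and \<open>B_mat\<close> is zero.\<close>
  show ?thesis
  proof (intro conjI allI impI; elim conjE)
    fix x v :: "nat \<Rightarrow> real \<Rightarrow> 'a"
    assume sol: "is_solution N \<alpha> (Q_CS A \<psi> x) x v"
      and small: "ennreal (diamX N v 0) < ennreal (\<alpha> * chi N A) * (\<integral>\<^sup>+ r\<in>{diamX N x 0..}. ennreal (\<psi> r) \<partial>lborel)"
    show "flocks N x v"
      by (rule flocks_if_weights_bounded_below[OF N_pos \<open>\<alpha> \<ge> 0\<close> _ sol small])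
        (simp add: Q_CS_ge_diam_weight A_nonneg)
  next
    fix a :: "nat \<Rightarrow> real" and x v :: "nat \<Rightarrow> real \<Rightarrow> 'a"
    assume "\<forall>i<N. a i \<ge> 0" and sol: "is_solution N \<alpha> (Q_MT N A a \<psi> x) x v"
      and small: "ennreal (diamX N v 0) < ennreal (\<alpha> * chi N (B_mat N A a)) * (\<integral>\<^sup>+ r\<in>{diamX N x 0..}. ennreal (\<psi> r) \<partial>lborel)"
    show "flocks N x v"
      by (rule flocks_if_weights_bounded_below[OF N_pos \<open>\<alpha> \<ge> 0\<close> _ sol small])
        (simp add: Q_MT_ge_diam_weight psi0 A_nonneg \<open>\<forall>i<N. a i \<ge> 0\<close>)
  qed
qed

end
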